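(* Let $S=(N,M_0)$ be a non-trivial, strongly connected H1S-WMG$_\le$ system with incidence matrix $I$, such that deleting the shared place (if any) yields a strongly connected WMG$_\le$. Then $S$ is live if and only if there is no pair $(M,Y)$ with $M\in\mathbb{N}^P$, $Y\in\mathbb{N}^T$, $M=M_0+I\cdot Y$, such that $M$ enables no transition of $N$.
   Context: A Petri net is $N=(P,T,W)$ with finite disjoint sets $P$, $T$ and weights $W:(P\times T)\cup(T\times P)\to\mathbb{N}$; incidence matrix $I(p,t)=W(t,p)-W(p,t)$. Non-trivial means $P$ and $T$ are non-empty. Strongly connected means the bipartite directed graph with vertices $P\cup T$ and an arc $(x,y)$ whenever $W(x,y)>0$ is strongly connected. Transition $t$ is enabled at $M$ if $M(p)\ge W(p,t)$ for all $p$; firing yields $M+I[\cdot,t]$. A system is live if for every transition $t$ and every reachable marking $M'$ some marking reachable from $M'$ enables $t$. A place is shared if it has at least two output transitions; the net is homogeneous if for each place all its output weights are equal. An H1S-WMG$_\le$ is a homogeneous net with at most one shared place such that deleting the shared place (if any) and its adjacent arcs (keeping all transitions) yields a WMG$_\le$, i.e. a net in which every place has at most one input and at most one output transition. *)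

theory Defs
  imports Main
begin

text \<open>A Petri net N = (P, T, W): places of type 'p, transitions of type 't (so P and T are
disjoint by construction), finite sets P and T, and weights split into
Wpt (place to transition) and Wtp (transition to place), vanishing outside P x T.\<close>

definition petri_net :: "'p set \<Rightarrow> 't set \<Rightarrow> ('p \<Rightarrow> 't \<Rightarrow> nat) \<Rightarrow> ('t \<Rightarrow> 'p \<Rightarrow> nat) \<Rightarrow> bool" where
  "petri_net P T Wpt Wtp \<longleftrightarrow> finite P \<and> finite T \<and>
     (\<forall>p t. (p \<notin> P \<or> t \<notin> T) \<longrightarrow> Wpt p t = 0 \<and> Wtp t p = 0)"

definition nontrivial :: "'p set \<Rightarrow> 't set \<Rightarrow> bool" where
  "nontrivial P T \<longleftrightarrow> P \<noteq> {} \<and> T \<noteq> {}"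

definition incidence :: "('p \<Rightarrow> 't \<Rightarrow> nat) \<Rightarrow> ('t \<Rightarrow> 'p \<Rightarrow> nat) \<Rightarrow> 'p \<Rightarrow> 't \<Rightarrow> int" where
  "incidence Wpt Wtp p t = int (Wtp t p) - int (Wpt p t)"

definition net_arc :: "'p set \<Rightarrow> 't set \<Rightarrow> ('p \<Rightarrow> 't \<Rightarrow> nat) \<Rightarrow> ('t \<Rightarrow> 'p \<Rightarrow> nat) \<Rightarrow> ('p + 't) rel" where
  "net_arc P T Wpt Wtp =
     {(Inl p, Inr t) | p t. p \<in> P \<and> t \<in> T \<and> Wpt p t > 0} \<union>
     {(Inr t, Inl p) | p t. p \<in> P \<and> t \<in> T \<and> Wtp t p > 0}"

definition strongly_connected :: "'p set \<Rightarrow> 't set \<Rightarrow> ('p \<Rightarrow> 't \<Rightarrow> nat) \<Rightarrow> ('t \<Rightarrow> 'p \<Rightarrow> nat) \<Rightarrow> bool" where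
  "strongly_connected P T Wpt Wtp \<longleftrightarrow>
     (\<forall>x \<in> Inl ` P \<union> Inr ` T. \<forall>y \<in> Inl ` P \<union> Inr ` T. (x, y) \<in> (net_arc P T Wpt Wtp)\<^sup>*)"

definition out_trans :: "'t set \<Rightarrow> ('p \<Rightarrow> 't \<Rightarrow> nat) \<Rightarrow> 'p \<Rightarrow> 't set" where
  "out_trans T Wpt p = {t \<in> T. Wpt p t > 0}"

definition in_trans :: "'t set \<Rightarrow> ('t \<Rightarrow> 'p \<Rightarrow> nat) \<Rightarrow> 'p \<Rightarrow> 't set" where
  "in_trans T Wtp p = {t \<in> T. Wtp t p > 0}"

definition shared_place :: "'t set \<Rightarrow> ('p \<Rightarrow> 't \<Rightarrow> nat) \<Rightarrow> 'p \<Rightarrow> bool" where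
  "shared_place T Wpt p \<longleftrightarrow> card (out_trans T Wpt p) \<ge> 2"

definition homogeneous :: "'p set \<Rightarrow> 't set \<Rightarrow> ('p \<Rightarrow> 't \<Rightarrow> nat) \<Rightarrow> bool" where
  "homogeneous P T Wpt \<longleftrightarrow>
     (\<forall>p \<in> P. \<forall>t1 \<in> out_trans T Wpt p. \<forall>t2 \<in> out_trans T Wpt p. Wpt p t1 = Wpt p t2)"

definition wmg_le :: "'p set \<Rightarrow> 't set \<Rightarrow> ('p \<Rightarrow> 't \<Rightarrow> nat) \<Rightarrow> ('t \<Rightarrow> 'p \<Rightarrow> nat) \<Rightarrow> bool" where
  "wmg_le P T Wpt Wtp \<longleftrightarrow>
     (\<forall>p \<in> P. card (in_trans T Wtp p) \<le> 1 \<and> card (out_trans T Wpt p) \<le> 1)"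

definition del_Wpt :: "'p set \<Rightarrow> ('p \<Rightarrow> 't \<Rightarrow> nat) \<Rightarrow> 'p \<Rightarrow> 't \<Rightarrow> nat" where
  "del_Wpt Q Wpt p t = (if p \<in> Q then 0 else Wpt p t)"

definition del_Wtp :: "'p set \<Rightarrow> ('t \<Rightarrow> 'p \<Rightarrow> nat) \<Rightarrow> 't \<Rightarrow> 'p \<Rightarrow> nat" where
  "del_Wtp Q Wtp t p = (if p \<in> Q then 0 else Wtp t p)"

definition shared_places :: "'p set \<Rightarrow> 't set \<Rightarrow> ('p \<Rightarrow> 't \<Rightarrow> nat) \<Rightarrow> 'p set" where
  "shared_places P T Wpt = {p \<in> P. shared_place T Wpt p}"

definition H1S_WMG_le :: "'p set \<Rightarrow> 't set \<Rightarrow> ('p \<Rightarrow> 't \<Rightarrow> nat) \<Rightarrow> ('t \<Rightarrow> 'p \<Rightarrow> nat) \<Rightarrow> bool" where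
  "H1S_WMG_le P T Wpt Wtp \<longleftrightarrow>
     homogeneous P T Wpt \<and>
     card (shared_places P T Wpt) \<le> 1 \<and>
     (let Q = shared_places P T Wpt in
        wmg_le (P - Q) T (del_Wpt Q Wpt) (del_Wtp Q Wtp))"

text \<open>Firing semantics. Markings are functions 'p \<Rightarrow> nat (only values on P matter).\<close>
definition enabled :: "'p set \<Rightarrow> ('p \<Rightarrow> 't \<Rightarrow> nat) \<Rightarrow> ('p \<Rightarrow> nat) \<Rightarrow> 't \<Rightarrow> bool" where
  "enabled P Wpt M t \<longleftrightarrow> (\<forall>p \<in> P. M p \<ge> Wpt p t)"

definition fire :: "('p \<Rightarrow> 't \<Rightarrow> nat) \<Rightarrow> ('t \<Rightarrow> 'p \<Rightarrow> nat) \<Rightarrow> ('p \<Rightarrow> nat) \<Rightarrow> 't \<Rightarrow> 'p \<Rightarrow> nat" where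
  "fire Wpt Wtp M t = (\<lambda>p. M p - Wpt p t + Wtp t p)"

inductive reachable :: "'p set \<Rightarrow> 't set \<Rightarrow> ('p \<Rightarrow> 't \<Rightarrow> nat) \<Rightarrow> ('t \<Rightarrow> 'p \<Rightarrow> nat)
    \<Rightarrow> ('p \<Rightarrow> nat) \<Rightarrow> ('p \<Rightarrow> nat) \<Rightarrow> bool"
  for P T Wpt Wtp where
  refl: "reachable P T Wpt Wtp M M"
| step: "reachable P T Wpt Wtp M M' \<Longrightarrow> t \<in> T \<Longrightarrow> enabled P Wpt M' t \<Longrightarrow>
         reachable P T Wpt Wtp M (fire Wpt Wtp M' t)"

definition live :: "'p set \<Rightarrow> 't set \<Rightarrow> ('p \<Rightarrow> 't \<Rightarrow> nat) \<Rightarrow> ('t \<Rightarrow> 'p \<Rightarrow> nat) \<Rightarrow> ('p \<Rightarrow> nat) \<Rightarrow> bool" where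
  "live P T Wpt Wtp M0 \<longleftrightarrow>
     (\<forall>t \<in> T. \<forall>M'. reachable P T Wpt Wtp M0 M' \<longrightarrow>
        (\<exists>M''. reachable P T Wpt Wtp M' M'' \<and> enabled P Wpt M'' t))"

end

theory Submission
  imports Defs
begin

text \<open>
If the system is not live, some transition t is dead after a reachable marking M'. A place of
the WMG part has at most one input transition, so the tokens it receives, and hence the firings
of its output transition, are bounded in terms of the firings of that input. Following the
strongly connected WMG part from t, which never fires again, bounds the firings after M' of
every transition, so firing greedily from M' ends in a reachable deadlock, and reachable
markings solve the state equation.

Conversely, let M = M0 + I Y be dead and fire greedily from M0 without exceeding Y, reaching M1
with remaining firing vector D. If some t0 is enabled at M1, then D t0 = 0 while t0 is disabled
at M, so an input place p of t0 loses tokens between M1 and M and needs another output u with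
D u > 0: p is the shared place, and by homogeneity it holds enough tokens at M1 for each of its
outputs. Hence every transition u with D u > 0 is blocked at M1 by a WMG place, which only a
transition v with D v > 0 can refill. These transitions block each other forever.
\<close>

inductive reachable_parikh :: "'p set \<Rightarrow> 't set \<Rightarrow> ('p \<Rightarrow> 't \<Rightarrow> nat) \<Rightarrow> ('t \<Rightarrow> 'p \<Rightarrow> nat)
    \<Rightarrow> ('p \<Rightarrow> nat) \<Rightarrow> ('p \<Rightarrow> nat) \<Rightarrow> ('t \<Rightarrow> nat) \<Rightarrow> bool"
  for P T Wpt Wtp M where
  refl: "reachable_parikh P T Wpt Wtp M M (\<lambda>_. 0)"
| step: "reachable_parikh P T Wpt Wtp M M' X \<Longrightarrow> t \<in> T \<Longrightarrow> enabled P Wpt M' t \<Longrightarrow>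
         reachable_parikh P T Wpt Wtp M (fire Wpt Wtp M' t) (X(t := Suc (X t)))"

lemma reachable_iff_reachable_parikh:
  "reachable P T Wpt Wtp M M' \<longleftrightarrow> (\<exists>X. reachable_parikh P T Wpt Wtp M M' X)"
proof
  show "reachable P T Wpt Wtp M M' \<Longrightarrow> \<exists>X. reachable_parikh P T Wpt Wtp M M' X"
    by (induction rule: reachable.induct) (auto intro: reachable_parikh.intros)
next
  assume "\<exists>X. reachable_parikh P T Wpt Wtp M M' X"
  then obtain X where "reachable_parikh P T Wpt Wtp M M' X" ..
  then show "reachable P T Wpt Wtp M M'"
    by (induction rule: reachable_parikh.induct) (auto intro: reachable.intros)
qed

lemma reachable_parikh_trans:
  assumes "reachable_parikh P T Wpt Wtp M M' X" "reachable_parikh P T Wpt Wtp M' M'' Z"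
  shows "reachable_parikh P T Wpt Wtp M M'' (\<lambda>t. X t + Z t)"
  using assms(2)
proof (induction rule: reachable_parikh.induct)
  case refl
  then show ?case using assms(1) by simp
next
  case (step M'' Z t)
  then have "reachable_parikh P T Wpt Wtp M (fire Wpt Wtp M'' t)
      ((\<lambda>s. X s + Z s)(t := Suc (X t + Z t)))"
    by (auto intro: reachable_parikh.step)
  moreover have "(\<lambda>s. X s + Z s)(t := Suc (X t + Z t)) = (\<lambda>s. X s + (Z(t := Suc (Z t))) s)"
    by auto
  ultimately show ?case by simp
qed

definition consumed :: "('p \<Rightarrow> 't \<Rightarrow> nat) \<Rightarrow> 't set \<Rightarrow> 'p \<Rightarrow> ('t \<Rightarrow> nat) \<Rightarrow> nat" where
  "consumed Wpt T p X = (\<Sum>t\<in>T. Wpt p t * X t)"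

definition produced :: "('t \<Rightarrow> 'p \<Rightarrow> nat) \<Rightarrow> 't set \<Rightarrow> 'p \<Rightarrow> ('t \<Rightarrow> nat) \<Rightarrow> nat" where
  "produced Wtp T p X = (\<Sum>t\<in>T. Wtp t p * X t)"

lemma sum_mult_fun_upd_Suc:
  fixes f :: "'a \<Rightarrow> nat"
  assumes "finite A" "a \<in> A"
  shows "(\<Sum>x\<in>A. f x * (X(a := Suc (X a))) x) = (\<Sum>x\<in>A. f x * X x) + f a"
proof -
  have "(\<Sum>x\<in>A. f x * (X(a := Suc (X a))) x) = (\<Sum>x\<in>A. f x * X x + (if x = a then f x else 0))"
    by (rule sum.cong) auto
  then show ?thesis using assms by (simp add: sum.distrib)
qed

lemma token_conservation:
  assumes "reachable_parikh P T Wpt Wtp M M' X" "finite T" "p \<in> P"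
  shows "M' p + consumed Wpt T p X = M p + produced Wtp T p X"
  using assms(1)
proof (induction rule: reachable_parikh.induct)
  case refl
  then show ?case by (simp add: consumed_def produced_def)
next
  case (step M' X t)
  have "Wpt p t \<le> M' p" using step.hyps(3) assms(3) by (simp add: enabled_def)
  moreover have "consumed Wpt T p (X(t := Suc (X t))) = consumed Wpt T p X + Wpt p t"
    "produced Wtp T p (X(t := Suc (X t))) = produced Wtp T p X + Wtp t p"
    unfolding consumed_def produced_def by (rule sum_mult_fun_upd_Suc[OF assms(2) step.hyps(2)])+
  ultimately show ?case using step.IH unfolding fire_def by linarith
qed

lemma sum_incidence:
  "(\<Sum>t\<in>T. incidence Wpt Wtp p t * int (X t)) = int (produced Wtp T p X) - int (consumed Wpt T p X)"
  by (simp add: incidence_def produced_def consumed_def sum_subtractf algebra_simps)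

lemma state_equation:
  assumes "reachable_parikh P T Wpt Wtp M M' X" "finite T" "p \<in> P"
  shows "int (M' p) = int (M p) + (\<Sum>t\<in>T. incidence Wpt Wtp p t * int (X t))"
  using token_conservation[OF assms] by (simp add: sum_incidence)

definition potentially_reachable :: "'p set \<Rightarrow> 't set \<Rightarrow> ('p \<Rightarrow> 't \<Rightarrow> nat) \<Rightarrow> ('t \<Rightarrow> 'p \<Rightarrow> nat)
    \<Rightarrow> ('p \<Rightarrow> nat) \<Rightarrow> ('p \<Rightarrow> nat) \<Rightarrow> bool" where
  "potentially_reachable P T Wpt Wtp M0 M \<longleftrightarrow>
     (\<exists>Y. \<forall>p\<in>P. int (M p) = int (M0 p) + (\<Sum>t\<in>T. incidence Wpt Wtp p t * int (Y t)))"

lemma reachable_imp_potentially_reachable: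
  assumes "reachable P T Wpt Wtp M0 M" "finite T"
  shows "potentially_reachable P T Wpt Wtp M0 M"
proof -
  obtain X where X: "reachable_parikh P T Wpt Wtp M0 M X"
    using assms(1) reachable_iff_reachable_parikh by blast
  show ?thesis
    unfolding potentially_reachable_def by (intro exI[of _ X] ballI state_equation[OF X assms(2)])
qed

lemma consumed_pos_imp_fired_output:
  assumes "0 < consumed Wpt T p X"
  shows "\<exists>u\<in>T. 0 < Wpt p u \<and> 0 < X u"
proof (rule ccontr)
  assume "\<not> ?thesis"
  then have "consumed Wpt T p X = 0" unfolding consumed_def by (intro sum.neutral) auto
  then show False using assms by simp
qed

lemma produced_pos_imp_fired_input:
  assumes "0 < produced Wtp T p X"
  shows "\<exists>v\<in>T. 0 < Wtp v p \<and> 0 < X v"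
proof (rule ccontr)
  assume "\<not> ?thesis"
  then have "produced Wtp T p X = 0" unfolding produced_def by (intro sum.neutral) auto
  then show False using assms by simp
qed

lemma consumed_eq_sum_out_trans:
  assumes "finite T"
  shows "consumed Wpt T p X = (\<Sum>t\<in>out_trans T Wpt p. Wpt p t * X t)"
  unfolding consumed_def out_trans_def using assms by (intro sum.mono_neutral_right) auto

lemma produced_eq_sum_in_trans:
  assumes "finite T"
  shows "produced Wtp T p X = (\<Sum>t\<in>in_trans T Wtp p. Wtp t p * X t)"
  unfolding produced_def in_trans_def using assms by (intro sum.mono_neutral_right) auto

lemma wmg_le_out_trans:
  assumes "wmg_le P T Wpt Wtp" "finite T" "p \<in> P" "u \<in> T" "0 < Wpt p u"
  shows "out_trans T Wpt p = {u}"
proof -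
  have "card (out_trans T Wpt p) \<le> Suc 0" using assms(1,3) by (simp add: wmg_le_def)
  moreover have "u \<in> out_trans T Wpt p" using assms(4,5) by (simp add: out_trans_def)
  ultimately show ?thesis using assms(2) card_le_Suc0_iff_eq[of "out_trans T Wpt p"]
    by (auto simp: out_trans_def)
qed

lemma wmg_le_in_trans:
  assumes "wmg_le P T Wpt Wtp" "finite T" "p \<in> P" "v \<in> T" "0 < Wtp v p"
  shows "in_trans T Wtp p = {v}"
proof -
  have "card (in_trans T Wtp p) \<le> Suc 0" using assms(1,3) by (simp add: wmg_le_def)
  moreover have "v \<in> in_trans T Wtp p" using assms(4,5) by (simp add: in_trans_def)
  ultimately show ?thesis using assms(2) card_le_Suc0_iff_eq[of "in_trans T Wtp p"]
    by (auto simp: in_trans_def)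
qed

lemma net_arc_del:
  "net_arc (P - Q) T (del_Wpt Q Wpt) (del_Wtp Q Wtp) = net_arc (P - Q) T Wpt Wtp"
  by (auto simp: net_arc_def del_Wpt_def del_Wtp_def)

lemma wmg_le_del:
  "wmg_le (P - Q) T (del_Wpt Q Wpt) (del_Wtp Q Wtp) = wmg_le (P - Q) T Wpt Wtp"
proof -
  have "in_trans T (del_Wtp Q Wtp) p = in_trans T Wtp p"
    "out_trans T (del_Wpt Q Wpt) p = out_trans T Wpt p" if "p \<in> P - Q" for p
    using that by (auto simp: in_trans_def out_trans_def del_Wpt_def del_Wtp_def)
  then show ?thesis by (simp add: wmg_le_def)
qed

lemma reachable_from_deadlock:
  assumes "reachable P T Wpt Wtp M M'" "\<forall>t\<in>T. \<not> enabled P Wpt M t"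
  shows "M' = M"
  using assms by (induction rule: reachable.induct) auto

lemma reachable_deadlock_not_live:
  assumes "T \<noteq> {}" "reachable P T Wpt Wtp M0 M" "\<forall>t\<in>T. \<not> enabled P Wpt M t"
  shows "\<not> live P T Wpt Wtp M0"
  using assms reachable_from_deadlock[of P T Wpt Wtp M _] unfolding live_def by blast

lemma maximal_bounded_run:
  fixes M :: "'p \<Rightarrow> nat" and B :: "'t \<Rightarrow> nat"
  assumes "finite T"
  obtains M' X where "reachable_parikh P T Wpt Wtp M M' X" "\<forall>u\<in>T. X u \<le> B u"
    "\<forall>u\<in>T. X u < B u \<longrightarrow> \<not> enabled P Wpt M' u"
proof -
  define bounded_run where
    "bounded_run = (\<lambda>(M', X). reachable_parikh P T Wpt Wtp M M' X \<and> (\<forall>u\<in>T. X u \<le> B u))"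
  define total where "total r = (\<Sum>u\<in>T. snd r u)" for r :: "('p \<Rightarrow> nat) \<times> ('t \<Rightarrow> nat)"
  have "bounded_run (M, \<lambda>_. 0)" by (simp add: bounded_run_def reachable_parikh.refl)
  moreover have "\<forall>r. bounded_run r \<longrightarrow> total r < (\<Sum>u\<in>T. B u) + 1"
    by (auto simp: bounded_run_def total_def intro!: le_imp_less_Suc sum_mono)
  ultimately obtain r where "bounded_run r" and "\<And>r'. bounded_run r' \<Longrightarrow> total r' \<le> total r"
    using ex_has_greatest_nat[of bounded_run _ total] by blast
  moreover obtain M' X where "r = (M', X)" by fastforce
  ultimately have run: "bounded_run (M', X)"
    and longest: "\<And>r'. bounded_run r' \<Longrightarrow> total r' \<le> total (M', X)" by auto
  have "\<not> enabled P Wpt M' u" if "u \<in> T" "X u < B u" for u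
  proof
    assume "enabled P Wpt M' u"
    then have "bounded_run (fire Wpt Wtp M' u, X(u := Suc (X u)))"
      using run that by (auto simp: bounded_run_def intro: reachable_parikh.step)
    then show False
      using longest sum_mult_fun_upd_Suc[OF assms that(1), of "\<lambda>_. 1" X]
      by (fastforce simp: total_def)
  qed
  then show thesis using that run by (auto simp: bounded_run_def)
qed

definition self_blocked :: "'p set \<Rightarrow> 't set \<Rightarrow> ('p \<Rightarrow> 't \<Rightarrow> nat) \<Rightarrow> ('t \<Rightarrow> 'p \<Rightarrow> nat)
    \<Rightarrow> ('p \<Rightarrow> nat) \<Rightarrow> 't set \<Rightarrow> bool" where
  "self_blocked P T Wpt Wtp M S \<longleftrightarrow> (\<forall>u\<in>S. \<exists>q\<in>P. in_trans T Wtp q \<subseteq> S \<and> M q < Wpt q u)"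

lemma self_blocked_no_refill:
  assumes "reachable_parikh P T Wpt Wtp M M' X" and blocked: "self_blocked P T Wpt Wtp M S"
  shows "\<forall>q. in_trans T Wtp q \<subseteq> S \<longrightarrow> M' q \<le> M q"
  using assms(1)
proof (induction rule: reachable_parikh.induct)
  case refl
  then show ?case by simp
next
  case (step M' X v)
  have "v \<notin> S"
  proof
    assume "v \<in> S"
    then obtain q where "q \<in> P" "M' q < Wpt q v"
      using blocked step.IH unfolding self_blocked_def by fastforce
    then show False using step.hyps(3) by (auto simp: enabled_def)
  qed
  then have "Wtp v q = 0" if "in_trans T Wtp q \<subseteq> S" for q
    using that step.hyps(2) by (auto simp: in_trans_def)
  then show ?case using step.IH by (auto simp: fire_def)
qed

lemma self_blocked_not_live:
  assumes "u \<in> S" "S \<subseteq> T" "reachable P T Wpt Wtp M0 M" and blocked: "self_blocked P T Wpt Wtp M S"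
  shows "\<not> live P T Wpt Wtp M0"
proof
  assume "live P T Wpt Wtp M0"
  then obtain M' X where "reachable_parikh P T Wpt Wtp M M' X" "enabled P Wpt M' u"
    using assms(1-3) reachable_iff_reachable_parikh unfolding live_def by (metis subsetD)
  moreover obtain q where "q \<in> P" "in_trans T Wtp q \<subseteq> S" "M q < Wpt q u"
    using blocked assms(1) unfolding self_blocked_def by blast
  ultimately show False
    using self_blocked_no_refill[OF _ blocked] by (fastforce simp: enabled_def)
qed

fun node_count :: "('t \<Rightarrow> 'p \<Rightarrow> nat) \<Rightarrow> 't set \<Rightarrow> 'p + 't \<Rightarrow> ('t \<Rightarrow> nat) \<Rightarrow> nat" where
  "node_count Wtp T (Inl p) X = produced Wtp T p X"
| "node_count Wtp T (Inr t) X = X t"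

definition count_bounded :: "'p set \<Rightarrow> 't set \<Rightarrow> ('p \<Rightarrow> 't \<Rightarrow> nat) \<Rightarrow> ('t \<Rightarrow> 'p \<Rightarrow> nat)
    \<Rightarrow> ('p \<Rightarrow> nat) \<Rightarrow> 'p + 't \<Rightarrow> bool" where
  "count_bounded P T Wpt Wtp M x \<longleftrightarrow>
     (\<exists>K. \<forall>M' X. reachable_parikh P T Wpt Wtp M M' X \<longrightarrow> node_count Wtp T x X \<le> K)"

lemma count_bounded_if_never_enabled:
  assumes "\<forall>M'. reachable P T Wpt Wtp M M' \<longrightarrow> \<not> enabled P Wpt M' t"
  shows "count_bounded P T Wpt Wtp M (Inr t)"
proof -
  have "X t = 0" if "reachable_parikh P T Wpt Wtp M M' X" for M' X
    using that
  proof (induction rule: reachable_parikh.induct)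
    case (step M' X u)
    then have "u \<noteq> t" using assms reachable_iff_reachable_parikh by blast
    then show ?case using step.IH by simp
  qed simp
  then show ?thesis unfolding count_bounded_def by (intro exI[of _ 0]) simp
qed

lemma count_bounded_arc:
  assumes "finite T" "P' \<subseteq> P" "wmg_le P' T Wpt Wtp"
    and "(x, y) \<in> net_arc P' T Wpt Wtp" "count_bounded P T Wpt Wtp M x"
  shows "count_bounded P T Wpt Wtp M y"
proof -
  obtain K where K: "\<And>M' X. reachable_parikh P T Wpt Wtp M M' X \<Longrightarrow> node_count Wtp T x X \<le> K"
    using assms(5) unfolding count_bounded_def by blast
  from assms(4) consider
      (place_to_trans) p u where "x = Inl p" "y = Inr u" "p \<in> P'" "u \<in> T" "0 < Wpt p u"
    | (trans_to_place) p v where "x = Inr v" "y = Inl p" "p \<in> P'" "v \<in> T" "0 < Wtp v p"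
    unfolding net_arc_def by blast
  then show ?thesis
  proof cases
    case place_to_trans
    have "X u \<le> M p + K" if run: "reachable_parikh P T Wpt Wtp M M' X" for M' X
    proof -
      have "X u \<le> Wpt p u * X u" using place_to_trans by simp
      also have "\<dots> \<le> consumed Wpt T p X"
        unfolding consumed_def using place_to_trans assms(1) by (intro member_le_sum) auto
      also have "\<dots> \<le> M p + produced Wtp T p X"
        using token_conservation[OF run assms(1)] place_to_trans assms(2) by fastforce
      finally show ?thesis using K[OF run] place_to_trans by simp
    qed
    then show ?thesis using place_to_trans unfolding count_bounded_def by auto
  next
    case trans_to_place
    have "produced Wtp T p X = Wtp v p * X v" for X
      using wmg_le_in_trans[OF assms(3,1)] trans_to_place
      by (simp add: produced_eq_sum_in_trans assms(1))
    then have "produced Wtp T p X \<le> Wtp v p * K" if "reachable_parikh P T Wpt Wtp M M' X" for M' X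
      using K[OF that] trans_to_place by simp
    then show ?thesis using trans_to_place unfolding count_bounded_def by auto
  qed
qed

lemma count_bounded_path:
  assumes "finite T" "P' \<subseteq> P" "wmg_le P' T Wpt Wtp"
    and "(x, y) \<in> (net_arc P' T Wpt Wtp)\<^sup>*" "count_bounded P T Wpt Wtp M x"
  shows "count_bounded P T Wpt Wtp M y"
  using assms(4,5)
  by (induction rule: rtrancl_induct) (use count_bounded_arc[OF assms(1-3)] in blast)+

lemma not_live_imp_reachable_deadlock:
  assumes "finite T" "P' \<subseteq> P" "wmg_le P' T Wpt Wtp" "strongly_connected P' T Wpt Wtp"
    and "\<not> live P T Wpt Wtp M0"
  shows "\<exists>M. reachable P T Wpt Wtp M0 M \<and> (\<forall>t\<in>T. \<not> enabled P Wpt M t)"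
proof -
  obtain t M' where t: "t \<in> T" and "reachable P T Wpt Wtp M0 M'"
    and dead: "\<forall>M''. reachable P T Wpt Wtp M' M'' \<longrightarrow> \<not> enabled P Wpt M'' t"
    using assms(5) unfolding live_def by blast
  then obtain X where X: "reachable_parikh P T Wpt Wtp M0 M' X"
    using reachable_iff_reachable_parikh by blast
  have "\<forall>u\<in>T. \<exists>k. \<forall>M Z. reachable_parikh P T Wpt Wtp M' M Z \<longrightarrow> Z u \<le> k"
  proof
    fix u assume "u \<in> T"
    then have "(Inr t, Inr u) \<in> (net_arc P' T Wpt Wtp)\<^sup>*"
      using assms(4) t unfolding strongly_connected_def by blast
    then have "count_bounded P T Wpt Wtp M' (Inr u)"
      using count_bounded_path[OF assms(1-3) _ count_bounded_if_never_enabled[OF dead]] by blast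
    then show "\<exists>k. \<forall>M Z. reachable_parikh P T Wpt Wtp M' M Z \<longrightarrow> Z u \<le> k"
      by (simp add: count_bounded_def)
  qed
  from bchoice[OF this] obtain K
    where K: "\<forall>u\<in>T. \<forall>M Z. reachable_parikh P T Wpt Wtp M' M Z \<longrightarrow> Z u \<le> K u" by blast
  obtain M Z where Z: "reachable_parikh P T Wpt Wtp M' M Z" and "\<forall>u\<in>T. Z u \<le> K u + 1"
    and stuck: "\<forall>u\<in>T. Z u < K u + 1 \<longrightarrow> \<not> enabled P Wpt M u"
    by (rule maximal_bounded_run[OF assms(1)])
  have "reachable P T Wpt Wtp M0 M"
    using reachable_parikh_trans[OF X Z] reachable_iff_reachable_parikh by blast
  moreover have "\<forall>t\<in>T. \<not> enabled P Wpt M t" using stuck K Z by (simp add: less_Suc_eq_le)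
  ultimately show ?thesis by blast
qed

lemma blocking_place_fed_by_remaining:
  assumes "finite T" "wmg_le P' T Wpt Wtp" "q \<in> P'" "u \<in> T" "0 < D u" "M q < Wpt q u"
    and diff: "M' q + consumed Wpt T q D = M q + produced Wtp T q D"
  shows "in_trans T Wtp q \<subseteq> {v \<in> T. 0 < D v}"
proof -
  have "consumed Wpt T q D = Wpt q u * D u"
    using wmg_le_out_trans[OF assms(2,1,3,4)] assms(6)
    by (simp add: consumed_eq_sum_out_trans assms(1))
  also have "\<dots> \<ge> Wpt q u" using assms(5) by simp
  finally have "0 < produced Wtp T q D" using diff assms(6) by linarith
  then obtain v where v: "v \<in> T" "0 < Wtp v q" "0 < D v"
    by (blast dest: produced_pos_imp_fired_input)
  have "in_trans T Wtp q = {v}" by (rule wmg_le_in_trans[OF assms(2,1,3) v(1,2)])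
  with v show ?thesis by auto
qed

lemma remaining_transitions_blocked:
  assumes "finite T" "homogeneous P T Wpt" "finite Q" "card Q \<le> 1" "wmg_le (P - Q) T Wpt Wtp"
    and diff: "\<forall>p\<in>P. M p + consumed Wpt T p D = M1 p + produced Wtp T p D"
    and stuck: "\<forall>u\<in>T. 0 < D u \<longrightarrow> \<not> enabled P Wpt M1 u"
    and t0: "t0 \<in> T" "enabled P Wpt M1 t0" "\<not> enabled P Wpt M t0"
  shows "\<exists>u\<in>T. 0 < D u" and "self_blocked P T Wpt Wtp M1 {v \<in> T. 0 < D v}"
proof -
  obtain p where p: "p \<in> P" "M p < Wpt p t0" "Wpt p t0 \<le> M1 p"
    using t0(2,3) by (auto simp: enabled_def not_le)
  then have "0 < consumed Wpt T p D" using diff[rule_format, OF p(1)] by linarith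
  then obtain u0 where u0: "u0 \<in> T" "0 < Wpt p u0" "0 < D u0"
    by (blast dest: consumed_pos_imp_fired_output)
  then show "\<exists>u\<in>T. 0 < D u" by blast
  have "p \<in> Q"
  proof (rule ccontr)
    assume "p \<notin> Q"
    with p(1) have "p \<in> P - Q" by blast
    moreover have "0 < Wpt p t0" using p(2) by simp
    ultimately have "out_trans T Wpt p = {t0}" "out_trans T Wpt p = {u0}"
      using wmg_le_out_trans[OF assms(5,1)] u0(1,2) t0(1) by blast+
    then have "u0 = t0" by simp
    with stuck t0(1,2) u0(3) show False by blast
  qed
  have p_covers: "Wpt p u \<le> M1 p" if "u \<in> T" for u
  proof (cases "Wpt p u = 0")
    case False
    then have "u \<in> out_trans T Wpt p" "t0 \<in> out_trans T Wpt p"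
      using that t0(1) p(2) by (auto simp: out_trans_def)
    then have "Wpt p u = Wpt p t0" using assms(2) p(1) unfolding homogeneous_def by blast
    then show ?thesis using p(3) by simp
  qed simp
  show "self_blocked P T Wpt Wtp M1 {v \<in> T. 0 < D v}"
    unfolding self_blocked_def
  proof
    fix u assume "u \<in> {v \<in> T. 0 < D v}"
    then have u: "u \<in> T" "0 < D u" by simp_all
    then obtain q where q: "q \<in> P" "M1 q < Wpt q u"
      using stuck by (auto simp: enabled_def not_le)
    have "q \<noteq> p" using q(2) p_covers[OF u(1)] by auto
    then have "q \<in> P - Q"
      using q(1) \<open>p \<in> Q\<close> assms(4) card_le_Suc0_iff_eq[OF assms(3)] by auto
    then have "in_trans T Wtp q \<subseteq> {v \<in> T. 0 < D v}"
      using blocking_place_fed_by_remaining[where M = M1 and M' = M and D = D, OF assms(1,5) _ u]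
        q(2) diff q(1) by blast
    with q show "\<exists>q\<in>P. in_trans T Wtp q \<subseteq> {v \<in> T. 0 < D v} \<and> M1 q < Wpt q u" by blast
  qed
qed

lemma token_balance_remaining:
  assumes "reachable_parikh P T Wpt Wtp M0 M1 X" "finite T" "\<forall>u\<in>T. X u \<le> Y u"
    and "\<forall>p\<in>P. int (M p) = int (M0 p) + (\<Sum>t\<in>T. incidence Wpt Wtp p t * int (Y t))"
  shows "\<forall>p\<in>P. M p + consumed Wpt T p (\<lambda>u. Y u - X u) = M1 p + produced Wtp T p (\<lambda>u. Y u - X u)"
proof
  fix p assume "p \<in> P"
  have "consumed Wpt T p Y = consumed Wpt T p X + consumed Wpt T p (\<lambda>u. Y u - X u)"
    "produced Wtp T p Y = produced Wtp T p X + produced Wtp T p (\<lambda>u. Y u - X u)"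
    using assms(3) by (auto simp: consumed_def produced_def sum.distrib[symmetric]
        add_mult_distrib2[symmetric] intro!: sum.cong)
  moreover have "int (M p) = int (M0 p) + int (produced Wtp T p Y) - int (consumed Wpt T p Y)"
    using assms(4) \<open>p \<in> P\<close> by (simp add: sum_incidence)
  ultimately show "M p + consumed Wpt T p (\<lambda>u. Y u - X u) = M1 p + produced Wtp T p (\<lambda>u. Y u - X u)"
    using token_conservation[OF assms(1,2) \<open>p \<in> P\<close>] by linarith
qed

lemma potential_deadlock_imp_not_live:
  assumes "finite T" "T \<noteq> {}" "homogeneous P T Wpt" "finite Q" "card Q \<le> 1"
    "wmg_le (P - Q) T Wpt Wtp"
    and "potentially_reachable P T Wpt Wtp M0 M" and dead: "\<forall>t\<in>T. \<not> enabled P Wpt M t"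
  shows "\<not> live P T Wpt Wtp M0"
proof -
  obtain Y where Y: "\<forall>p\<in>P. int (M p) = int (M0 p) + (\<Sum>t\<in>T. incidence Wpt Wtp p t * int (Y t))"
    using assms(7) unfolding potentially_reachable_def by blast
  obtain M1 X where run: "reachable_parikh P T Wpt Wtp M0 M1 X" and XY: "\<forall>u\<in>T. X u \<le> Y u"
    and stuck: "\<forall>u\<in>T. X u < Y u \<longrightarrow> \<not> enabled P Wpt M1 u"
    by (rule maximal_bounded_run[OF assms(1)])
  define D where "D = (\<lambda>u. Y u - X u)"
  have diff: "\<forall>p\<in>P. M p + consumed Wpt T p D = M1 p + produced Wtp T p D"
    unfolding D_def by (rule token_balance_remaining[OF run assms(1) XY Y])
  have stuck_remaining: "\<forall>u\<in>T. 0 < D u \<longrightarrow> \<not> enabled P Wpt M1 u"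
    using stuck by (simp add: D_def)
  have reach: "reachable P T Wpt Wtp M0 M1" using run reachable_iff_reachable_parikh by blast
  show ?thesis
  proof (cases "\<exists>t0\<in>T. enabled P Wpt M1 t0")
    case True
    then obtain t0 where t0: "t0 \<in> T" "enabled P Wpt M1 t0" by blast
    then obtain u where "u \<in> T" "0 < D u" using dead
      remaining_transitions_blocked(1)[OF assms(1,3-6) diff stuck_remaining] by blast
    then show ?thesis
      using self_blocked_not_live[of u "{v \<in> T. 0 < D v}", OF _ _ reach] t0 dead
        remaining_transitions_blocked(2)[OF assms(1,3-6) diff stuck_remaining] by blast
  next
    case False
    then show ?thesis using reachable_deadlock_not_live[OF assms(2) reach] by blast
  qed
qed

theorem mainTheorem7:
  fixes P :: "'p set" and T :: "'t set"
    and Wpt :: "'p \<Rightarrow> 't \<Rightarrow> nat" and Wtp :: "'t \<Rightarrow> 'p \<Rightarrow> nat"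
    and M0 :: "'p \<Rightarrow> nat"
  assumes net: "petri_net P T Wpt Wtp"
    and nt: "nontrivial P T"
    and sc: "strongly_connected P T Wpt Wtp"
    and h1s: "H1S_WMG_le P T Wpt Wtp"
    and sc_del: "strongly_connected (P - shared_places P T Wpt) T
                   (del_Wpt (shared_places P T Wpt) Wpt) (del_Wtp (shared_places P T Wpt) Wtp)"
  shows "live P T Wpt Wtp M0 \<longleftrightarrow>
    \<not> (\<exists>M :: 'p \<Rightarrow> nat. \<exists>Y :: 't \<Rightarrow> nat.
          (\<forall>p \<in> P. int (M p) = int (M0 p) + (\<Sum>t \<in> T. incidence Wpt Wtp p t * int (Y t))) \<and>
          (\<forall>t \<in> T. \<not> enabled P Wpt M t))"
proof -
  define Q where "Q = shared_places P T Wpt"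
  have fin: "finite P" "finite T" and "T \<noteq> {}"
    using net nt by (auto simp: petri_net_def nontrivial_def)
  have "finite Q" using fin by (simp add: Q_def shared_places_def)
  have hom: "homogeneous P T Wpt" and "card Q \<le> 1" and wmg: "wmg_le (P - Q) T Wpt Wtp"
    using h1s by (simp_all add: H1S_WMG_le_def Q_def wmg_le_del)
  have sc_wmg: "strongly_connected (P - Q) T Wpt Wtp"
    using sc_del by (simp add: Q_def strongly_connected_def net_arc_del)
  have "live P T Wpt Wtp M0 \<longleftrightarrow>
      \<not> (\<exists>M. potentially_reachable P T Wpt Wtp M0 M \<and> (\<forall>t\<in>T. \<not> enabled P Wpt M t))"
    using potential_deadlock_imp_not_live[OF fin(2) \<open>T \<noteq> {}\<close> hom \<open>finite Q\<close> \<open>card Q \<le> 1\<close> wmg]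
      not_live_imp_reachable_deadlock[OF fin(2) Diff_subset wmg sc_wmg]
      reachable_imp_potentially_reachable[OF _ fin(2)]
    by blast
  then show ?thesis unfolding potentially_reachable_def by blast
qed

end
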